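(* Let $q$ be a prime power, $m>4$, $F=\mathbb F_q$, $V=\mathbb F_q^m$. Let $E\subset E_1$ be subspaces of $\bigwedge^2V$ with $\dim E_1=\dim E+1$, and assume $E$ is decomposable and $E_1$ is not decomposable. Then: (i) the set $E_1\setminus E$ contains at most $q^2(q-1)$ decomposable vectors; (ii) if $E_1\setminus E$ contains a decomposable vector $\omega$ such that $V_\omega\subseteq V^E$, then $E_1\setminus E$ contains exactly $q^2(q-1)$ decomposable vectors.
   Context: A nonzero $\omega\in\bigwedge^2V$ is decomposable if $\omega=u\wedge v$ for some $u,v\in V$; a subspace is decomposable if all its nonzero elements are decomposable. For $\omega\in\bigwedge^2V$, $V_\omega=\{v\in V: v\wedge\omega=0\}$; for a subspace $E$, $V^E=\sum_{0\ne\omega\in E}V_\omega$. *)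

theory Defs
  imports "HOL-Analysis.Analysis"
begin

text \<open>V = F^m is modelled as the type 'a^'n (CARD('n) = m); the exterior square
  of V is modelled as the space of alternating coordinate arrays 'a^('n::finite \<times> 'n):
  an element w corresponds to sum over i<j of w(i,j) e_i \<and> e_j.\<close>

definition alt2 :: "('a::field ^ ('n::finite \<times> 'n)) set" where
  "alt2 = {w. \<forall>i j. w $ (i, j) = - w $ (j, i) \<and> w $ (i, i) = 0}"

definition wedge :: "'a::field ^ 'n \<Rightarrow> 'a ^ 'n \<Rightarrow> 'a ^ ('n::finite \<times> 'n)" where
  "wedge u v = (\<chi> p. u $ fst p * v $ snd p - u $ snd p * v $ fst p)"

definition decomposable :: "'a::field ^ ('n::finite \<times> 'n) \<Rightarrow> bool" where
  "decomposable w \<longleftrightarrow> w \<noteq> 0 \<and> (\<exists>u v. w = wedge u v)"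

definition decomposable_subspace :: "('a::field ^ ('n::finite \<times> 'n)) set \<Rightarrow> bool" where
  "decomposable_subspace E \<longleftrightarrow> (\<forall>w\<in>E. w \<noteq> 0 \<longrightarrow> decomposable w)"

text \<open>v \<and> w in the third exterior power, as its (alternating) coordinates.\<close>
definition wedge3 :: "'a::field ^ 'n \<Rightarrow> 'a ^ ('n::finite \<times> 'n) \<Rightarrow> 'n \<Rightarrow> 'n \<Rightarrow> 'n \<Rightarrow> 'a" where
  "wedge3 v w i j k = v $ i * w $ (j, k) - v $ j * w $ (i, k) + v $ k * w $ (i, j)"

definition Vw :: "'a::field ^ ('n::finite \<times> 'n) \<Rightarrow> ('a ^ 'n) set" where
  "Vw w = {v. wedge3 v w = (\<lambda>i j k. 0)}"

definition VE :: "('a::field ^ ('n::finite \<times> 'n)) set \<Rightarrow> ('a ^ 'n) set" where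
  "VE E = vec.span (\<Union>w\<in>E - {0}. Vw w)"

end

theory Submission
  imports Defs
begin

text \<open>Fix a decomposable \<open>w\<^sub>0 \<in> E\<^sub>1 - E\<close>. Since \<open>E\<^sub>1 = F w\<^sub>0 \<oplus> E\<close>, the decomposable
  vectors of \<open>E\<^sub>1 - E\<close> are the nonzero multiples of the decomposable translates \<open>w\<^sub>0 + e\<close>,
  \<open>e \<in> E\<close>; so there are \<open>(q - 1) |D|\<close> of them, where \<open>D\<close> is the set of such \<open>e\<close>.

  Two decomposable bivectors whose difference is decomposable share a factor (contract
  \<open>a \<and> b + c \<and> d\<close> with linear functionals). Hence the translates \<open>w\<^sub>0 + e\<close>, which differ by
  elements of \<open>E\<close>, form a family of pairwise intersecting lines of \<open>P(V)\<close>: either all pass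
  through one point \<open>p\<close>, or all lie in one plane \<open>U\<close>. In the first case \<open>D \<subseteq> E \<inter> p \<and> V\<close>,
  which has dimension at most 2, since otherwise every element of \<open>E\<close>, and then of \<open>E\<^sub>1\<close>,
  would be a multiple of \<open>p\<close>. In the second case \<open>D\<close> lies in \<open>E \<inter> \<Lambda>\<^sup>2U\<close>, a proper
  subspace of the 3-dimensional \<open>\<Lambda>\<^sup>2U\<close>. Either way \<open>|D| \<le> q\<^sup>2\<close>.

  Conversely, if both factors of \<open>w\<^sub>0 = x \<and> y\<close> lie in \<open>V\<^sup>E\<close>, the same dichotomy applied to
  the nonzero elements of \<open>E\<close> yields \<open>q\<^sup>2\<close> elements of \<open>D\<close>: all \<open>p \<and> (\<alpha>x + \<beta>y)\<close> in the
  first case (if \<open>x \<and> y = z \<and> u\<close> then \<open>x \<and> y + p \<and> z = z \<and> (u - p)\<close>), all of \<open>E\<close> (now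
  inside \<open>\<Lambda>\<^sup>2U\<close>) in the second.\<close>

section \<open>Linear algebra\<close>

lemma span_pair: "vec.span {a, b} = {x *s a + y *s b | x y. True}"
  by (auto simp: vec.span_insert vec.span_singleton algebra_simps)

lemma span_triple: "vec.span {a, b, c} = {x *s a + y *s b + z *s c | x y z. True}"
  by (auto simp: vec.span_insert vec.span_singleton algebra_simps)

lemma independent_triple_explicit:
  fixes a b c :: "'a::field^'m"
  assumes "vec.independent {a, b, c}" "a \<noteq> b" "a \<noteq> c" "b \<noteq> c"
    and "x *s a + y *s b + z *s c = 0"
  shows "x = 0 \<and> y = 0 \<and> z = 0"
proof (rule ccontr)
  assume nz: "\<not> (x = 0 \<and> y = 0 \<and> z = 0)"
  define u where "u v = (if v = a then x else if v = b then y else z)" for v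
  have "(\<Sum>v\<in>{a, b, c}. u v *s v) = x *s a + y *s b + z *s c"
    using assms(2-4) by (simp add: u_def add.assoc)
  moreover have "\<exists>v\<in>{a, b, c}. u v \<noteq> 0" using nz assms(2-4) u_def by auto
  ultimately have "vec.dependent {a, b, c}" using assms(5) vec.dependent_finite[of "{a, b, c}"] by auto
  then show False using assms(1) by blast
qed

lemma card_subspace:
  fixes S :: "('a::{field,finite} ^ 'm::finite) set"
  assumes "vec.subspace S"
  shows "card S = CARD('a) ^ vec.dim S"
proof -
  obtain B where B: "B \<subseteq> S" "vec.independent B" "S \<subseteq> vec.span B" "card B = vec.dim S"
    using vec.basis_exists by blast
  define g where "g u = (\<Sum>v\<in>B. u v *s v)" for u :: "'a^'m \<Rightarrow> 'a"
  have "bij_betw g (B \<rightarrow>\<^sub>E UNIV) S"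
  proof (rule bij_betw_imageI)
    show "inj_on g (B \<rightarrow>\<^sub>E UNIV)"
    proof (rule inj_onI)
      fix u u' assume u: "u \<in> B \<rightarrow>\<^sub>E UNIV" "u' \<in> B \<rightarrow>\<^sub>E UNIV" and "g u = g u'"
      then have "(\<Sum>v\<in>B. (u v - u' v) *s v) = 0"
        by (simp add: g_def algebra_simps sum_subtractf)
      then have "u v - u' v = 0" if "v \<in> B" for v
        using vec.independentD[OF B(2) finite order_refl, where u="\<lambda>v. u v - u' v"] that by blast
      then show "u = u'" by (intro PiE_ext[OF u]) simp
    qed
    have "S = range g"
      using B vec.span_subspace[OF B(1,3) assms] by (simp add: g_def vec.span_finite)
    also have "\<dots> = g ` (B \<rightarrow>\<^sub>E UNIV)"
    proof (intro equalityI subsetI)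
      fix x assume "x \<in> range g"
      then obtain u where "x = g u" by blast
      moreover have "g u = g (restrict u B)" unfolding g_def by (rule sum.cong) auto
      ultimately show "x \<in> g ` (B \<rightarrow>\<^sub>E UNIV)" by auto
    qed auto
    finally show "g ` (B \<rightarrow>\<^sub>E UNIV) = S" ..
  qed
  then have "card S = card (B \<rightarrow>\<^sub>E (UNIV :: 'a set))" by (simp add: bij_betw_same_card)
  also have "\<dots> = CARD('a) ^ vec.dim S" by (simp add: card_PiE B(4))
  finally show ?thesis .
qed

lemma card_subspace_ge_if_not_parallel:
  fixes S :: "('a::{field,finite} ^ 'm::finite) set"
  assumes S: "vec.subspace S" and f: "f0 \<in> S" "f1 \<in> S" "f0 \<noteq> 0" "f1 \<notin> vec.span {f0}"
  shows "CARD('a)^2 \<le> card S"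
proof -
  have "vec.independent {f0}" using f(3) by (simp add: vec.independent_insert)
  then have "vec.independent {f1, f0}" by (rule vec.independent_insertI[OF f(4)])
  moreover have "f1 \<noteq> f0" using f(4) vec.span_base[of f0 "{f0}"] by auto
  ultimately have "2 \<le> vec.dim S"
    using vec.independent_card_le_dim[of "{f1, f0}" S] f by simp
  then have "CARD('a)^2 \<le> CARD('a) ^ vec.dim S" by (intro power_increasing) auto
  also have "\<dots> = card S" by (rule card_subspace[OF S, symmetric])
  finally show ?thesis .
qed

lemma span_insert_eq_if_dim_Suc:
  assumes E: "vec.subspace E" and E1: "vec.subspace E1" and sub: "E \<subseteq> E1"
    and dim: "vec.dim E1 = vec.dim E + 1" and w0: "w0 \<in> E1" "w0 \<notin> E"
  shows "E1 = vec.span (insert w0 E)"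
proof -
  have "vec.span (insert w0 E) \<subseteq> E1"
    using sub w0 E1 by (intro vec.span_minimal) auto
  moreover have "vec.dim (vec.span (insert w0 E)) = vec.dim E1"
  proof -
    have "vec.span E = E" using E by simp
    then show ?thesis using w0(2) dim by (simp add: vec.dim_insert del: vec.span_eq_iff)
  qed
  ultimately show ?thesis
    using vec.subspace_dim_equal[of "vec.span (insert w0 E)" E1] E1 by simp
qed

lemma mem_span_insert_subspace:
  assumes "vec.subspace E"
  shows "w \<in> vec.span (insert w0 E) \<longleftrightarrow> (\<exists>k. w - k *s w0 \<in> E)"
proof -
  have "vec.span E = E" using assms by simp
  then show ?thesis unfolding vec.span_breakdown_eq by (simp del: vec.span_eq_iff)
qed

lemma dim_inter_span_triple_le_two:
  assumes "vec.subspace E" "w \<in> vec.span {a, b, c}" "w \<notin> E"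
  shows "vec.dim (E \<inter> vec.span {a, b, c}) \<le> 2"
proof -
  let ?W = "vec.span {a, b, c}"
  have "vec.span E = E" using assms(1) by simp
  then have "w \<notin> vec.span (E \<inter> ?W)"
    using vec.span_mono[of "E \<inter> ?W" E] assms(3) by (auto simp del: vec.span_eq_iff)
  then have "vec.dim (insert w (E \<inter> ?W)) = vec.dim (E \<inter> ?W) + 1" by (simp add: vec.dim_insert)
  moreover have "vec.dim (insert w (E \<inter> ?W)) \<le> vec.dim ?W"
    using assms(2) by (intro vec.dim_subset) auto
  moreover have "vec.dim ?W \<le> 3"
    unfolding vec.dim_span by (rule order_trans[OF vec.dim_le_card']) (auto simp: card_insert_if)
  ultimately show ?thesis by simp
qed

lemma add_ne_0_if_not_mem:
  assumes "vec.subspace E" "w \<notin> E" "e \<in> E"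
  shows "w + e \<noteq> 0"
proof
  assume "w + e = 0"
  then have "w = - e" by (simp add: add_eq_0_iff2)
  then show False using assms vec.subspace_neg by blast
qed

lemma add_not_mem_span_if_not_mem:
  assumes E: "vec.subspace E" and "w \<notin> E" "e \<in> E" "e \<noteq> 0"
  shows "w + e \<notin> vec.span {w}"
proof
  assume "w + e \<in> vec.span {w}"
  then obtain k where "e = (k - 1) *s w" by (auto simp: vec.span_singleton algebra_simps)
  moreover have "k - 1 \<noteq> 0" using calculation assms(4) by auto
  ultimately have "(1 / (k - 1)) *s e = w" by (simp only: vec.scale_scale) simp
  then show False using vec.subspace_scale[OF E assms(3)] assms(2) by metis
qed

lemma linear_functional_extend:
  fixes B :: "('a::field^'n) set"
  assumes "vec.independent B"
  shows "\<exists>g. Vector_Spaces.linear (*s) ((*) :: 'a \<Rightarrow> _) g \<and> (\<forall>x\<in>B. g x = f x)"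
  using vector_space_pair.linear_independent_extend[of "(*s)" "(*)" B f] assms
  by (auto simp: vector_space_pair_def vec.vector_space_axioms
      vector_space_over_itself.vector_space_axioms)

lemma linear_functional_expand:
  assumes "Vector_Spaces.linear (*s) ((*) :: 'a \<Rightarrow> _) g"
  shows "g (x::'a::field^'n) = (\<Sum>i\<in>UNIV. x$i * g (axis i 1))"
proof -
  have hom: "module_hom (*s) ((*)::'a\<Rightarrow>'a\<Rightarrow>'a) g"
    using assms by (simp add: Vector_Spaces.linear_def)
  have "g x = g (\<Sum>i\<in>UNIV. x$i *s axis i 1)" by (simp add: basis_expansion)
  also have "\<dots> = (\<Sum>i\<in>UNIV. x$i * g (axis i 1))"
    by (simp add: module_hom.sum[OF hom] module_hom.scale[OF hom])
  finally show ?thesis .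
qed

section \<open>Bivectors and their factors\<close>

lemma wedge_add_left: "wedge (a + b) c = wedge a c + wedge b c"
  by (simp add: vec_eq_iff wedge_def algebra_simps)

lemma wedge_add_right: "wedge a (b + c) = wedge a b + wedge a c"
  by (simp add: vec_eq_iff wedge_def algebra_simps)

lemma wedge_scale_left: "wedge (k *s a) b = k *s wedge a b"
  by (simp add: vec_eq_iff wedge_def algebra_simps)

lemma wedge_scale_right: "wedge a (k *s b) = k *s wedge a b"
  by (simp add: vec_eq_iff wedge_def algebra_simps)

lemma wedge_diff_left: "wedge (a - b) c = wedge a c - wedge b c"
  by (simp add: vec_eq_iff wedge_def algebra_simps)

lemma wedge_diff_right: "wedge a (b - c) = wedge a b - wedge a c"
  by (simp add: vec_eq_iff wedge_def algebra_simps)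

lemma wedge_minus_left: "wedge (- a) b = - wedge a b"
  by (simp add: vec_eq_iff wedge_def algebra_simps)

lemma wedge_minus_right: "wedge a (- b) = - wedge a b"
  by (simp add: vec_eq_iff wedge_def algebra_simps)

lemmas wedge_linear = wedge_add_left wedge_add_right wedge_scale_left wedge_scale_right
  wedge_diff_left wedge_diff_right wedge_minus_left wedge_minus_right

lemma wedge_anticommute: "wedge a b = - wedge b a"
  by (simp add: vec_eq_iff wedge_def algebra_simps)

lemma wedge_self [simp]: "wedge a a = 0"
  by (simp add: vec_eq_iff wedge_def)

lemma wedge_zero_left [simp]: "wedge 0 a = 0" and wedge_zero_right [simp]: "wedge a 0 = 0"
  by (simp_all add: vec_eq_iff wedge_def)

lemma wedge_eq_0_imp_parallel:
  fixes a b :: "'a::field^'n"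
  assumes "wedge a b = 0" "a \<noteq> 0" shows "\<exists>k. b = k *s a"
proof -
  obtain i where i: "a$i \<noteq> 0" using assms(2) by (auto simp: vec_eq_iff)
  have "\<forall>j. a$i * b$j - a$j * b$i = 0"
    using assms(1) by (auto simp: vec_eq_iff wedge_def dest: spec[of _ "(i, _)"])
  then have "b = (b$i / a$i) *s a" using i
    by (auto simp: vec_eq_iff field_simps)
  then show ?thesis by blast
qed

lemma wedge_nonzero_imp_independent:
  fixes a b :: "'a::field^'n"
  assumes "wedge a b \<noteq> 0" "x *s a + y *s b = 0"
  shows "x = 0" "y = 0"
proof -
  have "x *s wedge a b = wedge (x *s a + y *s b) b" "y *s wedge a b = wedge a (x *s a + y *s b)"
    by (simp_all add: wedge_linear)
  then have "x *s wedge a b = 0" "y *s wedge a b = 0" unfolding assms(2) by simp_all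
  then show "x = 0" "y = 0" using assms(1) by simp_all
qed

lemma wedge_refactor:
  fixes x y z :: "'a::field^'n"
  assumes "z \<in> vec.span {x, y}" "z \<noteq> 0"
  obtains u where "wedge x y = wedge z u"
proof -
  obtain a b where z: "z = a *s x + b *s y" using assms(1) by (auto simp: span_pair)
  show thesis
  proof (cases "a = 0")
    case False
    then have "wedge x y = wedge z ((1/a) *s y)" by (simp add: z wedge_linear)
    then show thesis by (rule that)
  next
    case True
    then have "b \<noteq> 0" using assms(2) z by auto
    then have "wedge x y = wedge z ((-1/b) *s x)"
      using True by (simp add: z wedge_linear wedge_anticommute[of y x])
    then show thesis by (rule that)
  qed
qed

lemma wedge_mem_span_wedge:
  assumes "x \<in> vec.span {a, b}" "y \<in> vec.span {a, b}"
  shows "wedge x y \<in> vec.span {wedge a b}"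
proof -
  obtain x1 y1 x2 y2 where "x = x1 *s a + y1 *s b" "y = x2 *s a + y2 *s b"
    using assms by (auto simp: span_pair)
  then have "wedge x y = (x1 * y2 - y1 * x2) *s wedge a b"
    by (simp add: vec_eq_iff wedge_def algebra_simps)
  then show ?thesis unfolding vec.span_singleton by blast
qed

lemma wedge_mem_span_wedges:
  assumes "a \<in> vec.span {p, s, t}" "b \<in> vec.span {p, s, t}"
  shows "wedge a b \<in> vec.span {wedge p s, wedge p t, wedge s t}"
proof -
  obtain x1 y1 z1 x2 y2 z2 where a: "a = x1 *s p + y1 *s s + z1 *s t" and b: "b = x2 *s p + y2 *s s + z2 *s t"
    using assms by (auto simp: span_triple)
  have "wedge a b = (x1*y2 - y1*x2) *s wedge p s + (x1*z2 - z1*x2) *s wedge p t + (y1*z2 - z1*y2) *s wedge s t"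
    by (simp add: a b vec_eq_iff wedge_def algebra_simps)
  then show ?thesis unfolding span_triple by blast
qed

lemma subspace_range_wedge: "vec.subspace (range (wedge p))"
proof (rule vec.subspaceI)
  show "0 \<in> range (wedge p)" by (metis rangeI wedge_zero_right)
  show "x + y \<in> range (wedge p)" if "x \<in> range (wedge p)" "y \<in> range (wedge p)" for x y
    using that by (auto simp: wedge_add_right[symmetric])
  show "c *s x \<in> range (wedge p)" if "x \<in> range (wedge p)" for c x
    using that by (auto simp: wedge_scale_right[symmetric])
qed

lemma wedge_factors_mem_Vw: "x \<in> Vw (wedge x y)" "y \<in> Vw (wedge x y)"
  by (simp_all add: Vw_def fun_eq_iff wedge3_def wedge_def algebra_simps)

lemma Vw_scale:
  assumes "(k::'a::field) \<noteq> 0" shows "Vw (k *s w) = Vw w"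
proof -
  have "wedge3 v (k *s w) i j l = k * wedge3 v w i j l" for v i j l
    by (simp add: wedge3_def algebra_simps)
  then show ?thesis using assms by (auto simp: Vw_def fun_eq_iff)
qed

lemma Vw_wedge:
  fixes a b :: "'a::field^'n"
  assumes "wedge a b \<noteq> 0"
  shows "Vw (wedge a b) = vec.span {a, b}"
proof (intro equalityI subsetI)
  fix v assume "v \<in> Vw (wedge a b)"
  then have W: "\<And>i j k. wedge3 v (wedge a b) i j k = 0" by (simp add: Vw_def fun_eq_iff)
  obtain p where "wedge a b $ p \<noteq> 0" using assms by (auto simp: vec_eq_iff)
  then obtain j k where m: "a$j*b$k - a$k*b$j \<noteq> 0"
    by (cases p) (auto simp: wedge_def)
  define m where "m = a$j*b$k - a$k*b$j"
  \<comment> \<open>Cramer's rule in the coordinates j, k\<close>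
  have "v = ((v$j*b$k - v$k*b$j)/m) *s a + ((v$k*a$j - v$j*a$k)/m) *s b"
  proof (subst vec_eq_iff, rule allI)
    fix i
    have "v$i * m = a$i*(v$j*b$k - v$k*b$j) + b$i*(v$k*a$j - v$j*a$k)"
      using W[of i j k] by (simp add: wedge3_def wedge_def m_def algebra_simps)
    then have "v$i = (a$i*(v$j*b$k - v$k*b$j) + b$i*(v$k*a$j - v$j*a$k)) / m"
      using m by (simp add: eq_divide_eq m_def[symmetric])
    then show "v$i = (((v$j*b$k - v$k*b$j)/m) *s a + ((v$k*a$j - v$j*a$k)/m) *s b)$i"
      by (simp add: add_divide_distrib mult.commute)
  qed
  then show "v \<in> vec.span {a, b}" unfolding span_pair by blast
next
  fix v assume "v \<in> vec.span {a, b}"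
  then obtain x y where "v = x *s a + y *s b" by (auto simp: span_pair)
  then show "v \<in> Vw (wedge a b)"
    by (simp add: Vw_def fun_eq_iff wedge3_def wedge_def algebra_simps)
qed

lemma VE_subset:
  assumes "vec.subspace T" "\<And>f. f \<in> E \<Longrightarrow> f \<noteq> 0 \<Longrightarrow> Vw f \<subseteq> T"
  shows "VE E \<subseteq> T"
  unfolding VE_def by (rule vec.span_minimal) (use assms in auto)

definition is_wedge :: "'a::field^('n::finite\<times>'n) \<Rightarrow> bool" where
  "is_wedge w \<longleftrightarrow> (\<exists>a b. w = wedge a b)"

lemma is_wedge_0 [simp]: "is_wedge 0"
  unfolding is_wedge_def by (metis wedge_self)

lemma is_wedge_scale: "is_wedge w \<Longrightarrow> is_wedge (k *s w)"
  unfolding is_wedge_def by (metis wedge_scale_left)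

text \<open>Every bivector on a 3-dimensional space is decomposable.\<close>
lemma is_wedge_if_mem_span_wedges:
  assumes "w \<in> vec.span {wedge p s, wedge p t, wedge s t}"
  shows "is_wedge w"
proof -
  obtain x y z where w: "w = x *s wedge p s + y *s wedge p t + z *s wedge s t"
    using assms by (auto simp: span_triple)
  show ?thesis
  proof (cases "x = 0")
    case True
    then have "w = wedge (y *s p + z *s s) t"
      by (simp add: w vec_eq_iff wedge_def algebra_simps)
    then show ?thesis unfolding is_wedge_def by blast
  next
    case False
    then have "w = wedge (p + (- z / x) *s t) (x *s s + y *s t)"
      by (simp add: w vec_eq_iff wedge_def field_simps)
    then show ?thesis unfolding is_wedge_def by blast
  qed
qed

lemma decomposable_iff_is_wedge: "decomposable w \<longleftrightarrow> w \<noteq> 0 \<and> is_wedge w"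
  by (simp add: decomposable_def is_wedge_def)

lemma decomposable_scale:
  assumes "k \<noteq> 0" shows "decomposable (k *s w) \<longleftrightarrow> decomposable w"
proof -
  have "w = (1/k) *s (k *s w)" using assms by simp
  then show ?thesis using assms is_wedge_scale by (metis decomposable_iff_is_wedge vec.scale_eq_0_iff)
qed

lemma decomposable_subspace_is_wedge: "decomposable_subspace E \<Longrightarrow> e \<in> E \<Longrightarrow> is_wedge e"
  unfolding decomposable_subspace_def by (cases "e = 0") (auto simp: decomposable_iff_is_wedge)

section \<open>Bivectors with a common factor\<close>

definition contract :: "('a::field^'n \<Rightarrow> 'a) \<Rightarrow> 'a^('n::finite\<times>'n) \<Rightarrow> 'a^'n" where
  "contract g w = (\<chi> j. \<Sum>i\<in>UNIV. g (axis i 1) * w $ (i, j))"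

lemma contract_add: "contract g (v + w) = contract g v + contract g w"
  by (simp add: vec_eq_iff contract_def algebra_simps sum.distrib)

lemma contract_wedge:
  assumes "Vector_Spaces.linear (*s) (*) g"
  shows "contract g (wedge x y) = g x *s y - g y *s x"
proof -
  have "(\<Sum>i\<in>UNIV. g (axis i 1) * (x$i * y$j - x$j * y$i))
     = (\<Sum>i\<in>UNIV. x$i * g (axis i 1)) * y$j - (\<Sum>i\<in>UNIV. y$i * g (axis i 1)) * x$j" for j
  proof -
    have "(\<Sum>i\<in>UNIV. g (axis i 1) * (x$i * y$j - x$j * y$i))
       = (\<Sum>i\<in>UNIV. (x$i * g (axis i 1)) * y$j - (y$i * g (axis i 1)) * x$j)"
      by (rule sum.cong) (auto simp: algebra_simps)
    then show ?thesis by (simp add: sum_subtractf sum_distrib_right)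
  qed
  then show ?thesis
    by (simp add: vec_eq_iff contract_def wedge_def linear_functional_expand[OF assms, of x] linear_functional_expand[OF assms, of y])
qed

lemma wedge_add_wedge_ne_wedge:
  fixes a b c d s t :: "'a::field^'n"
  assumes indep: "vec.independent {a, b, c, d}" and card: "card {a, b, c, d} = 4"
  shows "wedge a b + wedge c d \<noteq> wedge s t"
proof
  assume eq: "wedge a b + wedge c d = wedge s t"
  \<comment> \<open>contracting with the functionals dual to a, b, c, d puts b, a, d, c into span {s, t}\<close>
  have contracted: "g a *s b - g b *s a + (g c *s d - g d *s c) \<in> vec.span {s, t}"
    if g: "Vector_Spaces.linear (*s) (*) g" for g
  proof -
    have "g a *s b - g b *s a + (g c *s d - g d *s c) = contract g (wedge s t)"
      by (simp add: eq[symmetric] contract_add contract_wedge[OF g])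
    also have "\<dots> = g s *s t - g t *s s" by (rule contract_wedge[OF g])
    also have "\<dots> \<in> vec.span {s, t}"
      by (intro vec.span_diff vec.span_scale vec.span_base) auto
    finally show ?thesis .
  qed
  have distinct: "a \<noteq> b" "a \<noteq> c" "a \<noteq> d" "b \<noteq> c" "b \<noteq> d" "c \<noteq> d"
    using card by (auto simp: card_insert_if split: if_splits)
  have dual: "\<exists>g. Vector_Spaces.linear (*s) (*) g \<and> (\<forall>x\<in>{a, b, c, d}. g x = (if x = v then 1 else 0))"
    for v by (rule linear_functional_extend[OF indep])
  obtain ga where ga: "Vector_Spaces.linear (*s) (*) ga" "\<forall>x\<in>{a, b, c, d}. ga x = (if x = a then 1 else 0)"
    using dual by blast
  obtain gb where gb: "Vector_Spaces.linear (*s) (*) gb" "\<forall>x\<in>{a, b, c, d}. gb x = (if x = b then 1 else 0)"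
    using dual by blast
  obtain gc where gc: "Vector_Spaces.linear (*s) (*) gc" "\<forall>x\<in>{a, b, c, d}. gc x = (if x = c then 1 else 0)"
    using dual by blast
  obtain gd where gd: "Vector_Spaces.linear (*s) (*) gd" "\<forall>x\<in>{a, b, c, d}. gd x = (if x = d then 1 else 0)"
    using dual by blast
  have "b \<in> vec.span {s, t}" using contracted[OF ga(1)] ga(2) distinct by auto
  moreover have "- a \<in> vec.span {s, t}" using contracted[OF gb(1)] gb(2) distinct by auto
  moreover have "d \<in> vec.span {s, t}" using contracted[OF gc(1)] gc(2) distinct by auto
  moreover have "- c \<in> vec.span {s, t}" using contracted[OF gd(1)] gd(2) distinct by auto
  ultimately have "{a, b, c, d} \<subseteq> vec.span {s, t}"
    using vec.span_neg by fastforce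
  then have "card {a, b, c, d} \<le> card {s, t}"
    using vec.independent_span_bound[of "{s, t}" "{a, b, c, d}"] indep by auto
  also have "\<dots> \<le> 2" by (simp add: card_insert_if)
  finally show False using card by simp
qed

definition common_factor :: "'a::field^('n::finite\<times>'n) \<Rightarrow> 'a^('n\<times>'n) \<Rightarrow> bool" where
  "common_factor f g \<longleftrightarrow> (\<exists>z u v. z \<noteq> 0 \<and> f = wedge z u \<and> g = wedge z v)"

lemma common_factor_if_sum_is_wedge:
  fixes a b c d s t :: "'a::field^'n"
  assumes ab: "wedge a b \<noteq> 0" and cd: "wedge c d \<noteq> 0" and sum: "wedge a b + wedge c d = wedge s t"
  shows "common_factor (wedge a b) (wedge c d)"
proof -
  consider "c \<in> vec.span {a, b}" | "d \<in> vec.span {a, b, c}"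
    | "c \<notin> vec.span {a, b}" "d \<notin> vec.span {a, b, c}" by blast
  then show ?thesis
  proof cases
    case 1
    have "c \<noteq> 0" using cd by auto
    then obtain u where "wedge a b = wedge c u" using wedge_refactor 1 by blast
    then show ?thesis unfolding common_factor_def using \<open>c \<noteq> 0\<close> by blast
  next
    case 2
    then obtain x y z where d: "d = x *s a + y *s b + z *s c" by (auto simp: span_triple)
    define w where "w = x *s a + y *s b"
    have cdw: "wedge c d = wedge w (- c)"
      by (simp add: d w_def[symmetric] wedge_linear wedge_anticommute[of w c])
    then have "w \<noteq> 0" using cd by auto
    moreover have "w \<in> vec.span {a, b}" by (auto simp: span_pair w_def)
    ultimately obtain u where "wedge a b = wedge w u" using wedge_refactor by blast
    then show ?thesis unfolding common_factor_def using \<open>w \<noteq> 0\<close> cdw by blast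
  next
    case 3
    have "b \<noteq> 0" using ab by auto
    have a: "a \<notin> vec.span {b}"
    proof
      assume "a \<in> vec.span {b}"
      then obtain k where "a = k *s b" by (auto simp: vec.span_singleton)
      then show False using ab by (simp add: wedge_linear)
    qed
    have "vec.independent {b}" using \<open>b \<noteq> 0\<close> by (simp add: vec.independent_insert)
    then have "vec.independent {a, b}" by (rule vec.independent_insertI[OF a])
    then have "vec.independent {c, a, b}" by (rule vec.independent_insertI[OF 3(1)])
    moreover have "d \<notin> vec.span {c, a, b}" using 3(2) by (simp add: insert_commute)
    ultimately have "vec.independent {d, c, a, b}" by (simp add: vec.independent_insertI)
    then have indep: "vec.independent {a, b, c, d}" by (simp add: insert_commute)
    have "a \<noteq> b" "c \<noteq> a" "c \<noteq> b" "d \<noteq> a" "d \<noteq> b" "d \<noteq> c"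
      using a 3 vec.span_base[of _ "{a, b}"] vec.span_base[of _ "{a, b, c}"] vec.span_base[of b "{b}"]
      by auto
    then have "card {a, b, c, d} = 4" by simp
    then show ?thesis using wedge_add_wedge_ne_wedge[OF indep] sum by blast
  qed
qed

lemma common_factor_if_diff_is_wedge:
  assumes f: "decomposable f" and g: "decomposable g" and diff: "is_wedge (f - g)"
  shows "common_factor f g"
proof -
  obtain a b c d s t where abcd: "f = wedge a b" "g = wedge c d" "f - g = wedge s t"
    using assms by (auto simp: decomposable_def is_wedge_def)
  have "wedge a b + wedge c (- d) = wedge s t" using abcd by (simp add: wedge_linear)
  moreover have "wedge a b \<noteq> 0" "wedge c (- d) \<noteq> 0"
    using f g abcd by (auto simp: decomposable_def wedge_linear)
  ultimately obtain z u v where "z \<noteq> 0" "f = wedge z u" "g = wedge z (- v)"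
    using common_factor_if_sum_is_wedge abcd unfolding common_factor_def
    by (metis minus_minus wedge_minus_right)
  then show ?thesis unfolding common_factor_def by blast
qed

lemma common_factor_if_diff_mem:
  assumes "decomposable_subspace E" "decomposable f" "decomposable g" "f - g \<in> E"
  shows "common_factor f g"
  using assms common_factor_if_diff_is_wedge decomposable_subspace_is_wedge by blast

lemma common_factor_with_wedge:
  assumes "common_factor h (wedge p s)" "wedge p s \<noteq> 0"
  obtains z u where "z \<noteq> 0" "h = wedge z u" "z \<in> vec.span {p, s}"
proof -
  obtain z u v where z: "z \<noteq> 0" "h = wedge z u" "wedge p s = wedge z v"
    using assms(1) common_factor_def by blast
  have "z \<in> vec.span {p, s}"
    using wedge_factors_mem_Vw(1)[of z v] Vw_wedge[OF assms(2)] z(3) by simp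
  then show thesis using that z by blast
qed

lemma common_factor_not_parallel:
  assumes "common_factor f g" "f \<noteq> 0" "g \<notin> vec.span {f}"
  obtains p s t where "f = wedge p s" "g = wedge p t" "wedge p s \<noteq> 0" "t \<notin> vec.span {p, s}"
proof -
  obtain p s t where pst: "f = wedge p s" "g = wedge p t"
    using assms(1) common_factor_def by blast
  have "t \<notin> vec.span {p, s}"
  proof
    assume "t \<in> vec.span {p, s}"
    then obtain x y where "t = x *s p + y *s s" by (auto simp: span_pair)
    then have "g = y *s f" using pst by (simp add: wedge_linear)
    then show False using assms(3) by (simp add: vec.span_base vec.span_scale)
  qed
  then show thesis using that pst assms(2) by blast
qed

lemma span_pair_inter_span_pair:
  fixes p s t :: "'a::field^'n"
  assumes ps: "wedge p s \<noteq> 0" and t: "t \<notin> vec.span {p, s}"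
    and z: "z \<in> vec.span {p, s}" "z \<in> vec.span {p, t}"
  shows "\<exists>c. z = c *s p"
proof -
  obtain x1 y1 where xy1: "z = x1 *s p + y1 *s s" using z(1) by (auto simp: span_pair)
  obtain x2 y2 where xy2: "z = x2 *s p + y2 *s t" using z(2) by (auto simp: span_pair)
  have "y2 = 0"
  proof (rule ccontr)
    assume "y2 \<noteq> 0"
    have "y2 *s t = (x1 - x2) *s p + y1 *s s" using xy1 xy2 by (simp add: algebra_simps)
    then have "y2 *s t \<in> vec.span {p, s}" unfolding span_pair by blast
    then have "(1/y2) *s (y2 *s t) \<in> vec.span {p, s}" by (rule vec.span_scale)
    then show False using t \<open>y2 \<noteq> 0\<close> by simp
  qed
  then have "(x1 - x2) *s p + y1 *s s = 0" using xy1 xy2 by (simp add: algebra_simps)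
  then have "y1 = 0" by (rule wedge_nonzero_imp_independent(2)[OF ps])
  then show ?thesis using xy1 by auto
qed

lemma common_factor_with_two_wedges:
  fixes p s t :: "'a::field^'n"
  assumes ps: "wedge p s \<noteq> 0" and t: "t \<notin> vec.span {p, s}" and h: "h \<noteq> 0"
    and common: "common_factor h (wedge p s)" "common_factor h (wedge p t)"
  shows "h \<in> range (wedge p)
    \<or> (\<exists>a b. a \<in> vec.span {p, s, t} \<and> b \<in> vec.span {p, s, t} \<and> h = wedge a b)"
proof -
  have "p \<noteq> 0" using ps by auto
  have pt: "wedge p t \<noteq> 0"
  proof
    assume "wedge p t = 0"
    then obtain k where "t = k *s p" using wedge_eq_0_imp_parallel \<open>p \<noteq> 0\<close> by blast
    then have "t \<in> vec.span {p, s}" by (simp add: vec.span_base vec.span_scale)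
    then show False using t by blast
  qed
  obtain z1 u1 where z1: "z1 \<noteq> 0" "h = wedge z1 u1" "z1 \<in> vec.span {p, s}"
    using common_factor_with_wedge[OF common(1) ps] by metis
  obtain z2 u2 where z2: "z2 \<noteq> 0" "h = wedge z2 u2" "z2 \<in> vec.span {p, t}"
    using common_factor_with_wedge[OF common(2) pt] by metis
  show ?thesis
  proof (cases "wedge z1 z2 = 0")
    case True
    then obtain k where k: "z2 = k *s z1" using wedge_eq_0_imp_parallel z1(1) by blast
    then have "k \<noteq> 0" using z2(1) by auto
    then have "(1/k) *s z2 \<in> vec.span {p, t}" using z2(3) by (simp add: vec.span_scale)
    then have "z1 \<in> vec.span {p, t}" using k \<open>k \<noteq> 0\<close> by simp
    then obtain c where "z1 = c *s p" using span_pair_inter_span_pair[OF ps t z1(3)] by blast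
    then have "h = wedge p (c *s u1)" using z1(2) by (simp add: wedge_linear)
    then show ?thesis by blast
  next
    case False
    have "z2 \<in> Vw h" using wedge_factors_mem_Vw(1)[of z2 u2] z2(2) by simp
    then have "z2 \<in> vec.span {z1, u1}" using Vw_wedge[of z1 u1] h z1(2) by simp
    then obtain c d where cd: "z2 = c *s z1 + d *s u1" by (auto simp: span_pair)
    then have "wedge z1 z2 = d *s h" using z1(2) by (simp add: wedge_linear)
    then have "d \<noteq> 0" using False by auto
    then have "h = wedge ((1/d) *s z1) z2"
      using \<open>wedge z1 z2 = d *s h\<close> by (simp add: wedge_linear)
    moreover have "(1/d) *s z1 \<in> vec.span {p, s, t}" "z2 \<in> vec.span {p, s, t}"
      using z1(3) z2(3) vec.span_mono[of "{p, s}" "{p, s, t}"] vec.span_mono[of "{p, t}" "{p, s, t}"]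
      by (auto intro: vec.span_scale)
    ultimately show ?thesis by blast
  qed
qed

lemma no_common_factor_star_plane:
  assumes U: "vec.subspace U" "p \<in> U" and ab: "a \<in> U" "b \<in> U" "wedge a b \<noteq> 0"
    and star: "wedge a b \<notin> range (wedge p)" and y: "y \<notin> U" "wedge p y \<noteq> 0"
  shows "\<not> common_factor (wedge a b) (wedge p y)"
proof
  assume "common_factor (wedge a b) (wedge p y)"
  then obtain z u v where z: "z \<noteq> 0" "wedge a b = wedge z u" "wedge p y = wedge z v"
    using common_factor_def by blast
  have "z \<in> Vw (wedge a b)" "z \<in> Vw (wedge p y)"
    unfolding z(2,3) by (simp_all add: wedge_factors_mem_Vw)
  then have "z \<in> vec.span {a, b}" "z \<in> vec.span {p, y}"
    using Vw_wedge[of a b] Vw_wedge[of p y] ab(3) y(2) by simp_all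
  then have zU: "z \<in> U" using vec.span_minimal[of "{a, b}" U] ab U(1) by blast
  from \<open>z \<in> vec.span {p, y}\<close> obtain \<alpha> \<beta> where zz: "z = \<alpha> *s p + \<beta> *s y"
    by (auto simp: span_pair)
  show False
  proof (cases "\<beta> = 0")
    case True
    then have "wedge a b = wedge p (\<alpha> *s u)" using zz z(2) by (simp add: wedge_linear)
    then show False using star by blast
  next
    case False
    then have "y = (1/\<beta>) *s z + (- \<alpha> / \<beta>) *s p" using zz by (simp add: algebra_simps)
    then have "y \<in> U" using zU U by (metis vec.subspace_add vec.subspace_scale)
    then show False using y(1) by blast
  qed
qed

text \<open>Projectively: pairwise intersecting lines all pass through a point or all lie in a plane.\<close>
lemma common_factor_family_cases:
  fixes p s t :: "'a::field^'n"
  assumes ps: "wedge p s \<noteq> 0" and t: "t \<notin> vec.span {p, s}"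
    and dec: "\<forall>h\<in>F. decomposable h" and F: "wedge p s \<in> F" "wedge p t \<in> F"
    and common: "\<forall>h\<in>F. \<forall>h'\<in>F. common_factor h h'"
  shows "F \<subseteq> range (wedge p)
    \<or> F \<subseteq> {wedge a b | a b. a \<in> vec.span {p, s, t} \<and> b \<in> vec.span {p, s, t}}"
proof (rule ccontr)
  define U where "U = vec.span {p, s, t}"
  have nonzero: "h \<noteq> 0" if "h \<in> F" for h using dec that decomposable_def by blast
  have each: "h \<in> range (wedge p) \<or> (\<exists>a b. a \<in> U \<and> b \<in> U \<and> h = wedge a b)"
    if "h \<in> F" for h
    unfolding U_def using common_factor_with_two_wedges[OF ps t] common F that nonzero by blast
  assume "\<not> ?thesis"
  then obtain h h' where h: "h \<in> F" "h \<notin> range (wedge p)"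
    and h': "h' \<in> F" "\<not> (\<exists>a b. a \<in> U \<and> b \<in> U \<and> h' = wedge a b)"
    unfolding U_def by blast
  obtain a b where ab: "a \<in> U" "b \<in> U" "h = wedge a b" using each h by blast
  obtain y where y: "h' = wedge p y" using each h' by blast
  have "p \<in> U" unfolding U_def by (simp add: vec.span_base)
  then have "y \<notin> U" using h'(2) y by blast
  moreover have "vec.subspace U" unfolding U_def by simp
  ultimately show False
    using no_common_factor_star_plane[OF _ \<open>p \<in> U\<close> ab(1,2)] ab(3) y h h' common nonzero by blast
qed

section \<open>Counting decomposable translates\<close>

lemma inj_on_scale_translate:
  assumes E: "vec.subspace E" and w0: "w0 \<notin> E"
  shows "inj_on (\<lambda>(b, e). b *s (w0 + e)) ((UNIV - {0}) \<times> E)"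
proof (rule inj_onI)
  fix x y assume x: "x \<in> (UNIV - {0}) \<times> E" and y: "y \<in> (UNIV - {0}) \<times> E"
    and "(\<lambda>(b, e). b *s (w0 + e)) x = (\<lambda>(b, e). b *s (w0 + e)) y"
  then obtain b e b' e' where xy: "x = (b, e)" "y = (b', e')" "b \<noteq> 0" "e \<in> E" "e' \<in> E"
    and eq: "b *s (w0 + e) = b' *s (w0 + e')" by auto
  have "b = b'"
  proof (rule ccontr)
    assume "b \<noteq> b'"
    have "b' *s e' - b *s e \<in> E" using \<open>e \<in> E\<close> \<open>e' \<in> E\<close> E
      by (intro vec.subspace_diff vec.subspace_scale)
    moreover have "b' *s e' - b *s e = (b - b') *s w0" using eq by (simp add: algebra_simps)
    ultimately have "(1 / (b - b')) *s ((b - b') *s w0) \<in> E" using E vec.subspace_scale by metis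
    moreover have "(1 / (b - b')) *s ((b - b') *s w0) = w0"
      using \<open>b \<noteq> b'\<close> by (simp only: vec.scale_scale) simp
    ultimately show False using w0 by simp
  qed
  then show "x = y" using eq xy by simp
qed

lemma card_decomposable_diff:
  fixes E :: "('a::{field,finite} ^ ('n::finite \<times> 'n)) set"
  assumes E: "vec.subspace E" and w0: "w0 \<notin> E"
  shows "card {w \<in> vec.span (insert w0 E) - E. decomposable w}
    = (CARD('a) - 1) * card {e \<in> E. decomposable (w0 + e)}"
proof -
  define D where "D = {e \<in> E. decomposable (w0 + e)}"
  define f where "f = (\<lambda>(b::'a, e). b *s (w0 + e))"
  have img: "{w \<in> vec.span (insert w0 E) - E. decomposable w} = f ` ((UNIV - {0}) \<times> D)"
  proof (intro equalityI subsetI)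
    fix w assume "w \<in> {w \<in> vec.span (insert w0 E) - E. decomposable w}"
    then have w: "w \<in> vec.span (insert w0 E)" "w \<notin> E" "decomposable w" by auto
    obtain k where k: "w - k *s w0 \<in> E" using w(1) mem_span_insert_subspace[OF E] by blast
    have "k \<noteq> 0" using k w(2) by auto
    define e where "e = (1/k) *s (w - k *s w0)"
    have "e \<in> E" unfolding e_def using E k by (rule vec.subspace_scale)
    have we: "w = k *s (w0 + e)" using \<open>k \<noteq> 0\<close> by (simp add: e_def algebra_simps)
    then have "decomposable (w0 + e)" using w(3) \<open>k \<noteq> 0\<close> decomposable_scale by metis
    then have "(k, e) \<in> (UNIV - {0}) \<times> D" using \<open>k \<noteq> 0\<close> \<open>e \<in> E\<close> D_def by auto
    then show "w \<in> f ` ((UNIV - {0}) \<times> D)" using we f_def by force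
  next
    fix w assume "w \<in> f ` ((UNIV - {0}) \<times> D)"
    then obtain b e where be: "b \<noteq> 0" "e \<in> E" "decomposable (w0 + e)" "w = b *s (w0 + e)"
      using D_def f_def by auto
    have "w - b *s w0 \<in> E" using be E by (simp add: algebra_simps vec.subspace_scale)
    then have "w \<in> vec.span (insert w0 E)" using mem_span_insert_subspace[OF E] by blast
    moreover have "w \<notin> E"
    proof
      assume "w \<in> E"
      then have "(1/b) *s w - e \<in> E" using E be(2) vec.subspace_scale vec.subspace_diff by blast
      then show False using w0 be by simp
    qed
    moreover have "decomposable w" using be decomposable_scale by metis
    ultimately show "w \<in> {w \<in> vec.span (insert w0 E) - E. decomposable w}" by simp
  qed
  have "inj_on f ((UNIV - {0}) \<times> D)"
    unfolding f_def by (rule inj_on_subset[OF inj_on_scale_translate[OF E w0]]) (auto simp: D_def)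
  have "card {w \<in> vec.span (insert w0 E) - E. decomposable w} = card ((UNIV - {0::'a}) \<times> D)"
    using img card_image[OF \<open>inj_on f _\<close>] by simp
  also have "\<dots> = (CARD('a) - 1) * card D"
    by (simp add: card_cartesian_product card_Diff_singleton)
  finally show ?thesis unfolding D_def .
qed

lemma dependent_in_span_pair:
  assumes "z2 \<in> vec.span {z1, u}" "z3 \<in> vec.span {z1, u}"
  obtains c1 c2 c3 where "c1 *s z1 + c2 *s z2 + c3 *s z3 = 0" "c2 \<noteq> 0 \<or> c3 \<noteq> 0"
proof -
  obtain l2 m2 l3 m3 where l2: "z2 = l2 *s z1 + m2 *s u" and l3: "z3 = l3 *s z1 + m3 *s u"
    using assms by (auto simp: span_pair)
  show thesis
  proof (cases "m2 = 0")
    case True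
    then have "(- l2) *s z1 + 1 *s z2 + 0 *s z3 = 0" using l2 by simp
    then show ?thesis using that by fastforce
  next
    case False
    have "(- (m2*l3 - m3*l2)) *s z1 + (- m3) *s z2 + m2 *s z3 = 0"
      using l2 l3 by (simp add: vec_eq_iff algebra_simps)
    then show ?thesis using that False by fastforce
  qed
qed

lemma common_factor_off_star:
  assumes E: "vec.subspace E" and decE: "decomposable_subspace E"
    and f: "f \<in> E" "f \<notin> range (wedge p)" and w: "wedge p w \<in> E" "wedge p w \<noteq> 0"
  obtains z u a b where "f = wedge z u" "z = a *s p + b *s w" "b \<noteq> 0"
proof -
  have "decomposable f" using decE f by (metis decomposable_subspace_def rangeI wedge_zero_right)
  then have "common_factor f (wedge p w)"
    using common_factor_if_diff_mem[OF decE] w decE E f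
    by (simp add: decomposable_subspace_def vec.subspace_diff)
  then obtain z u where z: "f = wedge z u" "z \<in> vec.span {p, w}"
    using common_factor_with_wedge w(2) by metis
  then obtain a b where ab: "z = a *s p + b *s w" by (auto simp: span_pair)
  have "b \<noteq> 0"
  proof
    assume "b = 0"
    then have "f = wedge p (a *s u)" using z ab by (simp add: wedge_linear)
    then show False using f(2) by blast
  qed
  then show thesis using that z ab by blast
qed

lemma decomposable_subspace_star:
  fixes E :: "('a::field ^ ('n::finite \<times> 'n)) set"
  assumes E: "vec.subspace E" and decE: "decomposable_subspace E"
    and g: "wedge p w1 \<in> E" "wedge p w2 \<in> E" "wedge p w3 \<in> E"
    and indep: "\<And>x y z. x *s wedge p w1 + y *s wedge p w2 + z *s wedge p w3 = 0
      \<Longrightarrow> x = 0 \<and> y = 0 \<and> z = 0"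
  shows "E \<subseteq> range (wedge p)"
proof
  fix f assume f: "f \<in> E"
  show "f \<in> range (wedge p)"
  proof (rule ccontr)
    assume nstar: "f \<notin> range (wedge p)"
    have "wedge p w1 \<noteq> 0" "wedge p w2 \<noteq> 0" "wedge p w3 \<noteq> 0"
      using indep[of 1 0 0] indep[of 0 1 0] indep[of 0 0 1] by auto
    then obtain z1 u1 a1 b1 z2 u2 a2 b2 z3 u3 a3 b3 where
      z1: "f = wedge z1 u1" "z1 = a1 *s p + b1 *s w1" "b1 \<noteq> 0" and
      z2: "f = wedge z2 u2" "z2 = a2 *s p + b2 *s w2" "b2 \<noteq> 0" and
      z3: "f = wedge z3 u3" "z3 = a3 *s p + b3 *s w3" "b3 \<noteq> 0"
      using common_factor_off_star[OF E decE f nstar] g by metis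
    have "f \<noteq> 0" using nstar by (metis rangeI wedge_zero_right)
    have "z2 \<in> Vw f" unfolding z2(1) by (rule wedge_factors_mem_Vw(1))
    moreover have "z3 \<in> Vw f" unfolding z3(1) by (rule wedge_factors_mem_Vw(1))
    \<comment> \<open>z1, z2, z3 lie in the plane V_f\<close>
    ultimately obtain c1 c2 c3 where cc: "c1 *s z1 + c2 *s z2 + c3 *s z3 = 0" "c2 \<noteq> 0 \<or> c3 \<noteq> 0"
      using dependent_in_span_pair Vw_wedge[of z1 u1] z1(1) \<open>f \<noteq> 0\<close> by metis
    have "(c1*b1) *s wedge p w1 + (c2*b2) *s wedge p w2 + (c3*b3) *s wedge p w3 = wedge p 0"
      unfolding cc(1)[symmetric] using z1(2) z2(2) z3(2) by (simp add: wedge_linear)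
    then have "c2*b2 = 0" "c3*b3 = 0" using indep[of "c1*b1" "c2*b2" "c3*b3"] by simp_all
    then show False using cc(2) z2(3) z3(3) by simp
  qed
qed

lemma dim_star_le_two:
  fixes E :: "('a::field ^ ('n::finite \<times> 'n)) set"
  assumes E: "vec.subspace E" and decE: "decomposable_subspace E"
    and ndec: "\<not> decomposable_subspace (vec.span (insert (wedge p s) E))"
  shows "vec.dim (E \<inter> range (wedge p)) \<le> 2"
proof (rule ccontr)
  assume dim3: "\<not> ?thesis"
  obtain B where B: "B \<subseteq> E \<inter> range (wedge p)" "vec.independent B"
    "E \<inter> range (wedge p) \<subseteq> vec.span B" "card B = vec.dim (E \<inter> range (wedge p))"
    by (rule vec.basis_exists)
  have "3 \<le> card B" using B(4) dim3 by simp
  then obtain T where T: "T \<subseteq> B" "card T = 3" "finite T" by (rule obtain_subset_with_card_n)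
  then obtain g1 g2 g3 where g: "T = {g1, g2, g3}" "g1 \<noteq> g2" "g2 \<noteq> g3" "g1 \<noteq> g3"
    using T(2) unfolding card_3_iff by blast
  have indep: "vec.independent {g1, g2, g3}" using vec.independent_mono[OF B(2)] T g by auto
  have gs: "g1 \<in> E" "g2 \<in> E" "g3 \<in> E" "g1 \<in> range (wedge p)" "g2 \<in> range (wedge p)"
    "g3 \<in> range (wedge p)" using B(1) T g by auto
  obtain w1 w2 w3 where w: "g1 = wedge p w1" "g2 = wedge p w2" "g3 = wedge p w3"
    using gs(4-6) by (metis rangeE)
  have "E \<subseteq> range (wedge p)"
  proof (rule decomposable_subspace_star[OF E decE])
    show "wedge p w1 \<in> E" "wedge p w2 \<in> E" "wedge p w3 \<in> E" using gs w by simp_all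
    show "x = 0 \<and> y = 0 \<and> z = 0"
      if "x *s wedge p w1 + y *s wedge p w2 + z *s wedge p w3 = 0" for x y z
      using independent_triple_explicit[OF indep g(2,4,3)] that w by simp
  qed
  then have "vec.span (insert (wedge p s) E) \<subseteq> range (wedge p)"
    by (intro vec.span_minimal subspace_range_wedge) auto
  then have "decomposable_subspace (vec.span (insert (wedge p s) E))"
    by (fastforce simp: decomposable_subspace_def decomposable_def)
  then show False using ndec by blast
qed

lemma common_factor_translates:
  assumes E: "vec.subspace E" and decE: "decomposable_subspace E"
    and F: "F \<subseteq> (+) w0 ` E" "\<forall>h\<in>F. decomposable h"
  shows "\<forall>h\<in>F. \<forall>h'\<in>F. common_factor h h'"
proof (intro ballI)
  fix h h' assume h: "h \<in> F" "h' \<in> F"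
  then obtain e e' where "e \<in> E" "e' \<in> E" "h = w0 + e" "h' = w0 + e'" using F(1) by blast
  then have "h - h' \<in> E" using vec.subspace_diff[OF E] by simp
  then show "common_factor h h'" using common_factor_if_diff_mem[OF decE] F(2) h by blast
qed

lemma decomposable_translates_subset_dim_two:
  fixes E :: "('a::field ^ ('n::finite \<times> 'n)) set"
  assumes E: "vec.subspace E" and decE: "decomposable_subspace E"
    and w0: "w0 \<notin> E" "decomposable w0"
    and ndec: "\<not> decomposable_subspace (vec.span (insert w0 E))"
    and e1: "e1 \<in> E" "e1 \<noteq> 0" "decomposable (w0 + e1)"
  obtains S where "vec.subspace S" "{e \<in> E. decomposable (w0 + e)} \<subseteq> S" "vec.dim S \<le> 2"
proof -
  define D where "D = {e \<in> E. decomposable (w0 + e)}"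
  define F where "F = (+) w0 ` D"
  have dec: "\<forall>h\<in>F. decomposable h" using F_def D_def by auto
  have common: "\<forall>h\<in>F. \<forall>h'\<in>F. common_factor h h'"
    using common_factor_translates[OF E decE _ dec] unfolding F_def D_def by blast
  have "0 \<in> D" using D_def w0(2) vec.subspace_0[OF E] by simp
  then have F01: "w0 \<in> F" "w0 + e1 \<in> F" using e1 unfolding F_def D_def by force+
  have D_sub: "D \<subseteq> E \<inter> X" if X: "vec.subspace X" "F \<subseteq> X" for X
  proof
    fix e assume "e \<in> D"
    then have "w0 + e \<in> X" "e \<in> E" using X(2) F_def D_def by auto
    moreover have "w0 \<in> X" using X(2) F01 by blast
    ultimately show "e \<in> E \<inter> X" using vec.subspace_diff[OF X(1)] by (metis IntI add_diff_cancel_left')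
  qed
  obtain p s t where pst: "w0 = wedge p s" "w0 + e1 = wedge p t"
      "wedge p s \<noteq> 0" "t \<notin> vec.span {p, s}"
    using common_factor_not_parallel add_not_mem_span_if_not_mem[OF E w0(1) e1(1,2)]
      common F01 w0(2) decomposable_def by metis
  have "wedge p s \<in> F" "wedge p t \<in> F"
    using F01 unfolding pst(1)[symmetric] pst(2)[symmetric] by simp_all
  from common_factor_family_cases[OF pst(3,4) dec this common]
  consider "F \<subseteq> range (wedge p)"
    | "F \<subseteq> {wedge a b | a b. a \<in> vec.span {p, s, t} \<and> b \<in> vec.span {p, s, t}}"
    by blast
  then show thesis
  proof cases
    case 1
    then have "D \<subseteq> E \<inter> range (wedge p)" using D_sub subspace_range_wedge by blast
    moreover have "vec.dim (E \<inter> range (wedge p)) \<le> 2"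
      using dim_star_le_two[OF E decE] ndec pst(1) by blast
    ultimately show thesis
      using that vec.subspace_inter[OF E subspace_range_wedge] unfolding D_def by blast
  next
    case 2
    define W where "W = vec.span {wedge p s, wedge p t, wedge s t}"
    have "F \<subseteq> W" using 2 wedge_mem_span_wedges unfolding W_def by blast
    then have "D \<subseteq> E \<inter> W" using D_sub unfolding W_def by blast
    moreover have "vec.dim (E \<inter> W) \<le> 2"
      using dim_inter_span_triple_le_two[OF E] \<open>F \<subseteq> W\<close> F01 w0(1) unfolding W_def by blast
    ultimately show thesis
      using that vec.subspace_inter[OF E vec.subspace_span] unfolding D_def W_def by blast
  qed
qed

lemma card_decomposable_translates_le:
  fixes E :: "('a::{field,finite} ^ ('n::finite \<times> 'n)) set"
  assumes E: "vec.subspace E" and decE: "decomposable_subspace E"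
    and w0: "w0 \<notin> E" "decomposable w0"
    and ndec: "\<not> decomposable_subspace (vec.span (insert w0 E))"
  shows "card {e \<in> E. decomposable (w0 + e)} \<le> CARD('a)^2"
proof -
  obtain S where S: "vec.subspace S" "{e \<in> E. decomposable (w0 + e)} \<subseteq> S" "vec.dim S \<le> 2"
  proof (cases "{e \<in> E. decomposable (w0 + e)} \<subseteq> {0}")
    case True
    then show thesis using that[of "vec.span {}"] by simp
  next
    case False
    then obtain e1 where "e1 \<in> E" "e1 \<noteq> 0" "decomposable (w0 + e1)" by blast
    then show thesis using decomposable_translates_subset_dim_two[OF E decE w0 ndec] that by blast
  qed
  have "card {e \<in> E. decomposable (w0 + e)} \<le> card S" using S(2) by (intro card_mono) auto
  also have "\<dots> = CARD('a) ^ vec.dim S" by (rule card_subspace[OF S(1)])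
  also have "\<dots> \<le> CARD('a)^2" using S(3) by (intro power_increasing) auto
  finally show ?thesis .
qed

text \<open>If E is at most a line, V^E is a single V_f, which cannot contain both factors of a
  bivector outside E.\<close>
lemma not_parallel_if_Vw_subset_VE:
  assumes E: "vec.subspace E" and decE: "decomposable_subspace E"
    and w0: "w0 \<notin> E" "w0 = wedge x y" and VE: "Vw w0 \<subseteq> VE E"
  obtains f0 f1 where "f0 \<in> E" "f1 \<in> E" "f0 \<noteq> 0" "f1 \<notin> vec.span {f0}"
proof (cases "E \<subseteq> {0}")
  case True
  then have "E - {0} = {}" by blast
  then have "VE E = {0}" unfolding VE_def by (simp only:) simp
  then have "x = 0" using VE w0(2) wedge_factors_mem_Vw(1) by blast
  then show thesis using w0 vec.subspace_0[OF E] by simp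
next
  case False
  then obtain f0 where f0: "f0 \<in> E" "f0 \<noteq> 0" by blast
  show thesis
  proof (rule ccontr)
    assume "\<not> thesis"
    then have line: "E \<subseteq> vec.span {f0}" using that f0 by blast
    obtain a b where ab: "f0 = wedge a b"
      using decE f0 by (auto simp: decomposable_subspace_def decomposable_def)
    have "VE E \<subseteq> vec.span {a, b}"
    proof (rule VE_subset[OF vec.subspace_span])
      fix f assume "f \<in> E" "f \<noteq> 0"
      then obtain k where "f = k *s f0" "k \<noteq> 0" using line by (auto simp: vec.span_singleton)
      then show "Vw f \<subseteq> vec.span {a, b}" using Vw_scale[of k f0] Vw_wedge[of a b] f0(2) ab by simp
    qed
    then have "w0 \<in> vec.span {f0}"
      using VE w0(2) wedge_factors_mem_Vw wedge_mem_span_wedge ab by blast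
    then show False using w0(1) vec.span_minimal[of "{f0}" E] f0(1) E by blast
  qed
qed

lemma is_wedge_add_wedge:
  assumes "z \<in> vec.span {x, y}"
  shows "is_wedge (wedge x y + wedge p z)"
proof (cases "z = 0")
  case True
  then show ?thesis unfolding is_wedge_def by auto
next
  case False
  then obtain u where "wedge x y = wedge z u" using wedge_refactor assms by blast
  then have "wedge x y + wedge p z = wedge z (u - p)"
    by (simp add: wedge_linear wedge_anticommute[of p])
  then show ?thesis unfolding is_wedge_def by blast
qed

lemma wedges_not_parallel_if_not_mem:
  assumes E: "vec.subspace E" and w0: "wedge x y \<notin> E"
    and p: "p \<noteq> 0" and xy: "wedge p x \<in> E" "wedge p y \<in> E"
  shows "wedge p x \<noteq> 0" "wedge p y \<notin> vec.span {wedge p x}"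
proof
  assume "wedge p x = 0"
  then obtain k where "x = k *s p" using wedge_eq_0_imp_parallel p by blast
  then have "wedge x y = k *s wedge p y" by (simp add: wedge_linear)
  then show False using w0 vec.subspace_scale[OF E xy(2), of k] by simp
next
  show "wedge p y \<notin> vec.span {wedge p x}"
  proof
    assume "wedge p y \<in> vec.span {wedge p x}"
    then obtain k where "wedge p y = k *s wedge p x" by (auto simp: vec.span_singleton)
    then have "wedge p (y - k *s x) = 0" by (simp add: wedge_linear)
    then obtain c where "y - k *s x = c *s p" using wedge_eq_0_imp_parallel p by blast
    then have "y = k *s x + c *s p" by (simp add: algebra_simps)
    then have "wedge x y = (- c) *s wedge p x" by (simp add: wedge_linear wedge_anticommute[of x p])
    then show False using w0 vec.subspace_scale[OF E xy(1), of "- c"] by simp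
  qed
qed

lemma card_decomposable_translates_ge_star:
  fixes E :: "('a::{field,finite} ^ ('n::finite \<times> 'n)) set"
  assumes E: "vec.subspace E" and w0: "w0 \<notin> E" "w0 = wedge x y"
    and p: "p \<noteq> 0" and xy: "wedge p x \<in> E" "wedge p y \<in> E"
  shows "CARD('a)^2 \<le> card {e \<in> E. decomposable (w0 + e)}"
proof -
  define S where "S = vec.span {wedge p x, wedge p y}"
  have "S \<subseteq> E" unfolding S_def using xy E by (intro vec.span_minimal) auto
  have "S \<subseteq> {e \<in> E. decomposable (w0 + e)}"
  proof
    fix e assume "e \<in> S"
    then obtain \<alpha> \<beta> where "e = \<alpha> *s wedge p x + \<beta> *s wedge p y" by (auto simp: S_def span_pair)
    then have "e = wedge p (\<alpha> *s x + \<beta> *s y)" by (simp add: wedge_linear)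
    moreover have "\<alpha> *s x + \<beta> *s y \<in> vec.span {x, y}" by (auto simp: span_pair)
    ultimately have "is_wedge (w0 + e)" using is_wedge_add_wedge w0(2) by blast
    moreover have "e \<in> E" using \<open>e \<in> S\<close> \<open>S \<subseteq> E\<close> by blast
    ultimately show "e \<in> {e \<in> E. decomposable (w0 + e)}"
      using add_ne_0_if_not_mem[OF E w0(1)] by (simp add: decomposable_iff_is_wedge)
  qed
  then have "card S \<le> card {e \<in> E. decomposable (w0 + e)}" by (intro card_mono) auto
  moreover have "CARD('a)^2 \<le> card S" unfolding S_def
    using wedges_not_parallel_if_not_mem[OF E w0(1)[unfolded w0(2)] p xy]
    by (intro card_subspace_ge_if_not_parallel[OF vec.subspace_span]) (simp_all add: vec.span_base)
  ultimately show ?thesis by linarith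
qed

lemma VE_subset_if_star:
  assumes E: "vec.subspace E" and star: "E - {0} \<subseteq> range (wedge p)"
  shows "VE E \<subseteq> {v. wedge p v \<in> E}"
proof (rule VE_subset)
  show "vec.subspace {v. wedge p v \<in> E}"
    by (rule vec.subspaceI) (auto simp: wedge_linear vec.subspace_0[OF E]
        intro: vec.subspace_add[OF E] vec.subspace_scale[OF E])
  fix f assume f: "f \<in> E" "f \<noteq> 0"
  then obtain y where y: "f = wedge p y" using star by blast
  show "Vw f \<subseteq> {v. wedge p v \<in> E}"
  proof
    fix v assume "v \<in> Vw f"
    then obtain \<alpha> \<beta> where "v = \<alpha> *s p + \<beta> *s y"
      using Vw_wedge[of p y] f(2) y by (auto simp: span_pair)
    then have "wedge p v = \<beta> *s f" using y by (simp add: wedge_linear)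
    then show "v \<in> {v. wedge p v \<in> E}" using vec.subspace_scale[OF E f(1)] by simp
  qed
qed

lemma VE_subset_if_plane:
  assumes plane: "E - {0} \<subseteq> {wedge a b | a b. a \<in> vec.span U \<and> b \<in> vec.span U}"
  shows "VE E \<subseteq> vec.span U"
proof (rule VE_subset[OF vec.subspace_span])
  fix f assume f: "f \<in> E" "f \<noteq> 0"
  then obtain a b where ab: "a \<in> vec.span U" "b \<in> vec.span U" "f = wedge a b" using plane by blast
  then have "Vw f = vec.span {a, b}" using Vw_wedge f(2) by blast
  then show "Vw f \<subseteq> vec.span U" using ab by (simp add: vec.span_minimal)
qed

lemma card_decomposable_translates_ge_plane:
  fixes E :: "('a::{field,finite} ^ ('n::finite \<times> 'n)) set"
  assumes E: "vec.subspace E" and w0: "w0 \<notin> E" "w0 = wedge x y"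
    and xy: "x \<in> vec.span {p, s, t}" "y \<in> vec.span {p, s, t}"
    and plane: "E - {0} \<subseteq> {wedge a b | a b. a \<in> vec.span {p, s, t} \<and> b \<in> vec.span {p, s, t}}"
    and f: "f0 \<in> E" "f1 \<in> E" "f0 \<noteq> 0" "f1 \<notin> vec.span {f0}"
  shows "CARD('a)^2 \<le> card {e \<in> E. decomposable (w0 + e)}"
proof -
  define W where "W = vec.span {wedge p s, wedge p t, wedge s t}"
  have "w0 \<in> W" unfolding W_def w0(2) using xy by (rule wedge_mem_span_wedges)
  have "E \<subseteq> W"
  proof
    fix e assume "e \<in> E"
    show "e \<in> W"
    proof (cases "e = 0")
      case False
      then show ?thesis using plane \<open>e \<in> E\<close> wedge_mem_span_wedges unfolding W_def by blast
    qed (simp add: W_def vec.span_zero)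
  qed
  have "E \<subseteq> {e \<in> E. decomposable (w0 + e)}"
  proof
    fix e assume "e \<in> E"
    then have "w0 + e \<in> W" using \<open>w0 \<in> W\<close> \<open>E \<subseteq> W\<close> unfolding W_def by (blast intro: vec.span_add)
    then have "is_wedge (w0 + e)" unfolding W_def by (rule is_wedge_if_mem_span_wedges)
    then show "e \<in> {e \<in> E. decomposable (w0 + e)}"
      using \<open>e \<in> E\<close> add_ne_0_if_not_mem[OF E w0(1)] by (simp add: decomposable_iff_is_wedge)
  qed
  then have "card E \<le> card {e \<in> E. decomposable (w0 + e)}" by (intro card_mono) auto
  moreover have "CARD('a)^2 \<le> card E" using card_subspace_ge_if_not_parallel[OF E f] .
  ultimately show ?thesis by linarith
qed

lemma card_decomposable_translates_ge:
  fixes E :: "('a::{field,finite} ^ ('n::finite \<times> 'n)) set"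
  assumes E: "vec.subspace E" and decE: "decomposable_subspace E"
    and w0: "w0 \<notin> E" "w0 = wedge x y" and VE: "Vw w0 \<subseteq> VE E"
  shows "CARD('a)^2 \<le> card {e \<in> E. decomposable (w0 + e)}"
proof -
  obtain f0 f1 where f: "f0 \<in> E" "f1 \<in> E" "f0 \<noteq> 0" "f1 \<notin> vec.span {f0}"
    using not_parallel_if_Vw_subset_VE[OF E decE w0 VE] .
  have xy: "x \<in> VE E" "y \<in> VE E" using VE w0(2) wedge_factors_mem_Vw by blast+
  have dec: "\<forall>h\<in>E - {0}. decomposable h" using decE decomposable_subspace_def by blast
  have common: "\<forall>h\<in>E - {0}. \<forall>h'\<in>E - {0}. common_factor h h'"
    using common_factor_if_diff_mem[OF decE] dec vec.subspace_diff[OF E] by blast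
  have "f1 \<noteq> 0" using f(4) vec.span_zero by auto
  then obtain p s t where pst: "f0 = wedge p s" "f1 = wedge p t" "wedge p s \<noteq> 0" "t \<notin> vec.span {p, s}"
    using common_factor_not_parallel[OF _ f(3,4)] common f(1-3) by blast
  have "wedge p s \<in> E - {0}" "wedge p t \<in> E - {0}" using f pst \<open>f1 \<noteq> 0\<close> by auto
  from common_factor_family_cases[OF pst(3,4) dec this common]
  consider "E - {0} \<subseteq> range (wedge p)"
    | "E - {0} \<subseteq> {wedge a b | a b. a \<in> vec.span {p, s, t} \<and> b \<in> vec.span {p, s, t}}"
    by blast
  then show ?thesis
  proof cases
    case 1
    then have "VE E \<subseteq> {v. wedge p v \<in> E}" by (rule VE_subset_if_star[OF E])
    then have "wedge p x \<in> E" "wedge p y \<in> E" using xy by auto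
    moreover have "p \<noteq> 0" using pst(3) by auto
    ultimately show ?thesis using card_decomposable_translates_ge_star[OF E w0] by blast
  next
    case 2
    then have "x \<in> vec.span {p, s, t}" "y \<in> vec.span {p, s, t}"
      using VE_subset_if_plane xy by blast+
    then show ?thesis using card_decomposable_translates_ge_plane[OF E w0 _ _ 2 f] by blast
  qed
qed

theorem lemma6p3:
  fixes E E1 :: "('a::{field, finite} ^ ('n::finite \<times> 'n)) set"
  assumes m: "CARD('n) > 4"
    and E: "vec.subspace E" and E1: "vec.subspace E1"
    and sub: "E \<subseteq> E1" and E1alt: "E1 \<subseteq> alt2"
    and dim: "vec.dim E1 = vec.dim E + 1"
    and decE: "decomposable_subspace E"
    and ndecE1: "\<not> decomposable_subspace E1"
  shows "card {w \<in> E1 - E. decomposable w} \<le> CARD('a)^2 * (CARD('a) - 1)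
    \<and> ((\<exists>w \<in> E1 - E. decomposable w \<and> Vw w \<subseteq> VE E) \<longrightarrow>
         card {w \<in> E1 - E. decomposable w} = CARD('a)^2 * (CARD('a) - 1))"
proof -
  have E1_eq: "E1 = vec.span (insert w0 E)" if "w0 \<in> E1 - E" for w0
    using span_insert_eq_if_dim_Suc[OF E E1 sub dim] that by blast
  have count: "card {w \<in> E1 - E. decomposable w}
      = (CARD('a) - 1) * card {e \<in> E. decomposable (w0 + e)}" if "w0 \<in> E1 - E" for w0
    using card_decomposable_diff[OF E, of w0] E1_eq[OF that] that by simp
  have upper: "card {e \<in> E. decomposable (w0 + e)} \<le> CARD('a)^2"
    if "w0 \<in> E1 - E" "decomposable w0" for w0
    using card_decomposable_translates_le[OF E decE] ndecE1 E1_eq that by blast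
  show ?thesis
  proof (intro conjI impI)
    show "card {w \<in> E1 - E. decomposable w} \<le> CARD('a)^2 * (CARD('a) - 1)"
    proof (cases "{w \<in> E1 - E. decomposable w} = {}")
      case False
      then obtain w0 where "w0 \<in> E1 - E" "decomposable w0" by blast
      then show ?thesis using count upper by (simp add: mult.commute)
    qed (simp only: card.empty)
  next
    assume "\<exists>w \<in> E1 - E. decomposable w \<and> Vw w \<subseteq> VE E"
    then obtain w0 x y where w0: "w0 \<in> E1 - E" "decomposable w0" "Vw w0 \<subseteq> VE E" "w0 = wedge x y"
      unfolding decomposable_def by blast
    then have "card {e \<in> E. decomposable (w0 + e)} = CARD('a)^2"
      using upper card_decomposable_translates_ge[OF E decE _ w0(4,3)] by (simp add: le_antisym)
    then show "card {w \<in> E1 - E. decomposable w} = CARD('a)^2 * (CARD('a) - 1)"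
      using count w0 by simp
  qed
qed

end
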